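(* Let $T$ be a decomposition tree of a distance-hereditary graph $G$, and let $v$ be an internal node of $T$ labeled $\oplus$ with left child $v_l$ and right child $v_r$, such that property (P) holds at $v_l$ and at $v_r$. Assume that $\hat\alpha(v_r)\le\hat\beta(v_l)$, and that neither ($\hat\alpha(v_l)=\hat\beta(v_r)=0$) nor ($\hat\alpha(v_r)=\hat\beta(v_l)=0$) holds. Then $$\hat\alpha(v)=\begin{cases}\hat\alpha(v_l)-\hat\beta(v_r) & \text{if } \hat\alpha(v_l)>\hat\beta(v_r),\\ |\hat\alpha(v_l)-\hat\alpha(v_r)|\bmod 2 & \text{otherwise.}\end{cases}$$
   Context: All graphs are finite, simple, undirected. For a graph $H$ and $S\subseteq V(H)$, $N_H[S]$ is $S$ together with all vertices adjacent to a vertex of $S$, and $H[S]$ is the induced subgraph. Graphs carry a "twin set": a single-vertex graph on $x$ has twin set $\{x\}$. For vertex-disjoint graphs $G_l,G_r$ with twin sets $TS(G_l),TS(G_r)$: the true twin operation $G_l\otimes G_r$ has vertex set $V(G_l)\cup V(G_r)$, edge set $E(G_l)\cup E(G_r)\cup\{uw: u\in TS(G_l), w\in TS(G_r)\}$ and twin set $TS(G_l)\cup TS(G_r)$; the false twin operation $G_l\odot G_r$ has vertex set $V(G_l)\cup V(G_r)$, edge set $E(G_l)\cup E(G_r)$, twin set $TS(G_l)\cup TS(G_r)$; the attachment operation $G_l\oplus G_r$ has the same vertex and edge sets as $G_l\otimes G_r$ and twin set $TS(G_l)$. A decomposition tree $T$ of $G$ is a rooted binary tree whose leaves are in bijection with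 $V(G)$, each internal node having a left and a right child and a label in $\{\otimes,\odot,\oplus\}$; for each node $v$ define $\hat G(v)$ and $\hat{TS}(v)$ recursively: for a leaf $x$, the single-vertex graph on $x$ with twin set $\{x\}$; for an internal node $v$ with label $\circ$ and children $v_l,v_r$, $\hat G(v)=\hat G(v_l)\circ\hat G(v_r)$ with the corresponding twin set; one requires $\hat G(\text{root})=G$. Then $\hat G(v)$ is the subgraph of $G$ induced by the set $\hat V(v)$ of leaves below $v$. For a node $u$ and $0\le k\le|\hat{TS}(u)|$, call $S\subseteq\hat V(u)$ $k$-feasible if $\hat V(u)\setminus\hat{TS}(u)\subseteq N_{\hat G(u)}[S]$ and there is $X\subseteq S\cap\hat{TS}(u)$ with $|X|=k$ such that $\hat G(u)[S\setminus X]$ has a perfect matching. $\hat\gamma_k(u)$ is the minimum size of a $k$-feasible set. $\hat{min}(u)=\min\{\hat\gamma_k(u):0\le k\le|\hat{TS}(u)|\}$, and $\hat\alpha(u)$, $\hat\beta(u)$ are the smallest and the largest $k$ with $\hat\gamma_k(u)=\hat{min}(u)$. Property (P) holds at $u$ if for every $0\le k\le|\hat{TS}(u)|$: $\hat\gamma_k(u)=\hat{min}(u)+\hat\alpha(u)-k$ when $k\le\hat\alpha(u)$; $\hat\gamma_k(u)=\hat{min}(u)+k-\hat\beta(u)$ when $k\ge\hat\beta(u)$; $\hat\gamma_k(u)=\hat{min}(u)$ when $\hat\alpha(u)<k<\hat\beta(u)$ and $k-\hat\alpha(u)$ is even; and $\hat\gamma_k(u)=\hat{min}(u)+1$ otherwise.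 *)

theory Defs
  imports Main "HOL-Library.Extended_Nat"
begin

type_synonym 'a graph = "'a set \<times> 'a set set"

definition simple_graph :: "'a graph \<Rightarrow> bool" where
  "simple_graph G \<longleftrightarrow> finite (fst G) \<and>
     (\<forall>e\<in>snd G. \<exists>u w. e = {u, w} \<and> u \<noteq> w \<and> u \<in> fst G \<and> w \<in> fst G)"

definition walk_in :: "'a set set \<Rightarrow> 'a set \<Rightarrow> 'a \<Rightarrow> 'a \<Rightarrow> nat \<Rightarrow> bool" where
  "walk_in E W u w n \<longleftrightarrow> (\<exists>xs. length xs = Suc n \<and> hd xs = u \<and> last xs = w \<and> set xs \<subseteq> W \<and>
       (\<forall>i < n. {xs ! i, xs ! Suc i} \<in> E))"

text \<open>Distance between u and w in the induced subgraph G[W] (meaningful when connected).\<close>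
definition dist_in :: "'a set set \<Rightarrow> 'a set \<Rightarrow> 'a \<Rightarrow> 'a \<Rightarrow> nat" where
  "dist_in E W u w = (LEAST n. walk_in E W u w n)"

definition distance_hereditary :: "'a graph \<Rightarrow> bool" where
  "distance_hereditary G \<longleftrightarrow> simple_graph G \<and>
     (\<forall>W \<subseteq> fst G. \<forall>u\<in>W. \<forall>w\<in>W. (\<exists>n. walk_in (snd G) W u w n) \<longrightarrow>
        dist_in (snd G) W u w = dist_in (snd G) (fst G) u w)"

datatype op = TrueTwin | FalseTwin | Attach

datatype 'a dtree = Leaf 'a | Node op "'a dtree" "'a dtree"

fun leaves :: "'a dtree \<Rightarrow> 'a list" where
  "leaves (Leaf x) = [x]"
| "leaves (Node _ l r) = leaves l @ leaves r"

fun tV :: "'a dtree \<Rightarrow> 'a set" where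
  "tV (Leaf x) = {x}"
| "tV (Node _ l r) = tV l \<union> tV r"

fun tTS :: "'a dtree \<Rightarrow> 'a set" where
  "tTS (Leaf x) = {x}"
| "tTS (Node TrueTwin l r) = tTS l \<union> tTS r"
| "tTS (Node FalseTwin l r) = tTS l \<union> tTS r"
| "tTS (Node Attach l r) = tTS l"

fun tE :: "'a dtree \<Rightarrow> 'a set set" where
  "tE (Leaf x) = {}"
| "tE (Node TrueTwin l r) = tE l \<union> tE r \<union> {{u, w} |u w. u \<in> tTS l \<and> w \<in> tTS r}"
| "tE (Node FalseTwin l r) = tE l \<union> tE r"
| "tE (Node Attach l r) = tE l \<union> tE r \<union> {{u, w} |u w. u \<in> tTS l \<and> w \<in> tTS r}"

fun subtrees :: "'a dtree \<Rightarrow> 'a dtree set" where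
  "subtrees (Leaf x) = {Leaf x}"
| "subtrees (Node c l r) = insert (Node c l r) (subtrees l \<union> subtrees r)"

definition decomp_tree :: "'a dtree \<Rightarrow> 'a graph \<Rightarrow> bool" where
  "decomp_tree T G \<longleftrightarrow> distinct (leaves T) \<and> set (leaves T) = fst G \<and>
     tV T = fst G \<and> tE T = snd G"

definition closed_nbhd :: "'a set set \<Rightarrow> 'a set \<Rightarrow> 'a set" where
  "closed_nbhd E S = S \<union> {w. \<exists>s\<in>S. {s, w} \<in> E}"

definition has_perfect_matching :: "'a set set \<Rightarrow> 'a set \<Rightarrow> bool" where
  "has_perfect_matching E W \<longleftrightarrow> (\<exists>M \<subseteq> E. (\<forall>e\<in>M. e \<subseteq> W) \<and>
     (\<forall>e\<in>M. \<forall>e'\<in>M. e \<noteq> e' \<longrightarrow> e \<inter> e' = {}) \<and> \<Union>M = W)"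

definition k_feasible :: "'a dtree \<Rightarrow> nat \<Rightarrow> 'a set \<Rightarrow> bool" where
  "k_feasible u k S \<longleftrightarrow> S \<subseteq> tV u \<and> tV u - tTS u \<subseteq> closed_nbhd (tE u) S \<and>
     (\<exists>X. X \<subseteq> S \<inter> tTS u \<and> card X = k \<and> has_perfect_matching (tE u) (S - X))"

text \<open>Minimum size of a k-feasible set (infinity if none exists).\<close>
definition hgamma :: "'a dtree \<Rightarrow> nat \<Rightarrow> enat" where
  "hgamma u k = (INF S \<in> {S. k_feasible u k S}. enat (card S))"

definition hmin :: "'a dtree \<Rightarrow> enat" where
  "hmin u = Min (hgamma u ` {0..card (tTS u)})"

definition halpha :: "'a dtree \<Rightarrow> nat" where
  "halpha u = Min {k. k \<le> card (tTS u) \<and> hgamma u k = hmin u}"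

definition hbeta :: "'a dtree \<Rightarrow> nat" where
  "hbeta u = Max {k. k \<le> card (tTS u) \<and> hgamma u k = hmin u}"

definition propP :: "'a dtree \<Rightarrow> bool" where
  "propP u \<longleftrightarrow> (\<forall>k \<le> card (tTS u).
     (k \<le> halpha u \<longrightarrow> hgamma u k = hmin u + enat (halpha u - k)) \<and>
     (k \<ge> hbeta u \<longrightarrow> hgamma u k = hmin u + enat (k - hbeta u)) \<and>
     (halpha u < k \<and> k < hbeta u \<and> even (k - halpha u) \<longrightarrow> hgamma u k = hmin u) \<and>
     (halpha u < k \<and> k < hbeta u \<and> odd (k - halpha u) \<longrightarrow> hgamma u k = hmin u + 1))"

end

theory Submission
  imports Defs "HOL-Library.Disjoint_Sets"
begin

text \<open>
At an attachment node \<open>v = l \<oplus> r\<close> the twin set of \<open>v\<close> is that of \<open>l\<close>, and the only edges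
between the two sides join \<open>TS(l)\<close> to \<open>TS(r)\<close>. A \<open>k\<close>-feasible set of \<open>v\<close> therefore splits
into a \<open>(k+j)\<close>-feasible set of \<open>l\<close> and a \<open>j\<close>-feasible set of \<open>r\<close>, where \<open>j\<close> is the number of
matching edges between the sides; conversely a \<open>k'\<close>-feasible set of \<open>l\<close> and a \<open>j\<close>-feasible set
of \<open>r\<close> with \<open>j \<le> k'\<close> and \<open>k' \<ge> 1\<close> combine into a \<open>(k'-j)\<close>-feasible set of \<open>v\<close>, an unmatched
vertex of \<open>X\<close> dominating \<open>TS(r)\<close>. Hence \<open>\<gamma>\<^sub>k(v) \<ge> min(l) + min(r)\<close>; equality forces
\<open>k = k' - j\<close> for minimum positions \<open>k'\<close> of \<open>l\<close> and \<open>j\<close> of \<open>r\<close>, and holds at every such offset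
with \<open>k' \<ge> 1\<close>. A \<open>k\<close>-feasible set has size congruent to \<open>k\<close> modulo 2, so all minimum positions
of a node have the parity of \<open>\<alpha>\<close>; under (P) they are exactly the indices of that parity between
\<open>\<alpha>\<close> and \<open>\<beta>\<close>. The least offset is then \<open>\<alpha>(l) - \<beta>(r)\<close> if this is positive, and otherwise
the parity of \<open>\<alpha>(l) + \<alpha>(r)\<close>.
\<close>

section \<open>Decomposition trees\<close>

lemma tV_eq_set_leaves: "tV u = set (leaves u)"
  by (induction u) auto

lemma finite_tV [simp]: "finite (tV u)"
  by (simp add: tV_eq_set_leaves)

lemma tTS_subset_tV: "tTS u \<subseteq> tV u"
  by (induction u rule: tTS.induct) auto

lemma finite_tTS [simp]: "finite (tTS u)"
  using finite_subset[OF tTS_subset_tV finite_tV] .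

lemma tTS_nonempty: "tTS u \<noteq> {}"
  by (induction u rule: tTS.induct) auto

lemma one_le_card_tTS: "1 \<le> card (tTS u)"
  using tTS_nonempty[of u] by (simp add: Suc_le_eq card_gt_0_iff)

lemma distinct_leaves_NodeD:
  assumes "distinct (leaves (Node c l r))"
  shows "distinct (leaves l)" "distinct (leaves r)" "tV l \<inter> tV r = {}"
  using assms by (auto simp: tV_eq_set_leaves)

lemma distinct_leaves_subtree: "t \<in> subtrees u \<Longrightarrow> distinct (leaves u) \<Longrightarrow> distinct (leaves t)"
  by (induction u) (auto dest: distinct_leaves_NodeD)

lemma tE_edge:
  "distinct (leaves u) \<Longrightarrow> e \<in> tE u \<Longrightarrow> \<exists>a b. e = {a, b} \<and> a \<noteq> b \<and> a \<in> tV u \<and> b \<in> tV u"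
proof (induction u arbitrary: e)
  case (Node c l r)
  note d = distinct_leaves_NodeD[OF Node.prems(1)]
  have "e \<in> tE l \<or> e \<in> tE r \<or> (\<exists>a b. e = {a, b} \<and> a \<in> tTS l \<and> b \<in> tTS r)"
    using Node.prems(2) by (cases c) auto
  then show ?case
  proof (elim disjE exE conjE)
    fix a b assume "e = {a, b}" "a \<in> tTS l" "b \<in> tTS r"
    with d(3) tTS_subset_tV[of l] tTS_subset_tV[of r] show ?case
      by (intro exI[of _ a] exI[of _ b]) auto
  qed (use Node.IH d in fastforce)+
qed simp

lemma tE_subset_tV: "distinct (leaves u) \<Longrightarrow> e \<in> tE u \<Longrightarrow> e \<subseteq> tV u"
  using tE_edge by fastforce

lemma card_tE: "distinct (leaves u) \<Longrightarrow> e \<in> tE u \<Longrightarrow> card e = 2"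
  using tE_edge by fastforce

section \<open>Perfect matchings\<close>

lemma has_perfect_matching_iff:
  "has_perfect_matching E W \<longleftrightarrow> (\<exists>M \<subseteq> E. disjoint M \<and> \<Union>M = W)"
  unfolding has_perfect_matching_def disjoint_def by blast

lemma has_perfect_matching_mono:
  "E \<subseteq> E' \<Longrightarrow> has_perfect_matching E W \<Longrightarrow> has_perfect_matching E' W"
  unfolding has_perfect_matching_iff by blast

lemma has_perfect_matching_empty: "has_perfect_matching E {}"
  unfolding has_perfect_matching_iff by auto

lemma has_perfect_matching_Un:
  assumes "has_perfect_matching E1 W1" "has_perfect_matching E2 W2" "W1 \<inter> W2 = {}"
  shows "has_perfect_matching (E1 \<union> E2) (W1 \<union> W2)"
proof -
  obtain M1 M2 where M: "M1 \<subseteq> E1" "disjoint M1" "\<Union>M1 = W1"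
    "M2 \<subseteq> E2" "disjoint M2" "\<Union>M2 = W2"
    using assms(1,2) unfolding has_perfect_matching_iff by blast
  then have "disjoint (M1 \<union> M2)"
    using assms(3) by (intro disjoint_union) simp_all
  moreover have "M1 \<union> M2 \<subseteq> E1 \<union> E2" "\<Union>(M1 \<union> M2) = W1 \<union> W2"
    using M by auto
  ultimately show ?thesis
    unfolding has_perfect_matching_iff by blast
qed

lemma has_perfect_matching_bipartite:
  assumes "finite A" "finite B" "card A = card B" "A \<inter> B = {}"
    and "\<And>a b. a \<in> A \<Longrightarrow> b \<in> B \<Longrightarrow> {a, b} \<in> E"
  shows "has_perfect_matching E (A \<union> B)"
proof -
  obtain f where f: "bij_betw f A B"
    using finite_same_card_bij[OF assms(1-3)] by blast
  then have fB: "f a \<in> B" and inj: "f a = f a' \<longleftrightarrow> a = a'" if "a \<in> A" "a' \<in> A" for a a'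
    using that by (auto simp: bij_betw_def inj_on_def)
  let ?M = "(\<lambda>a. {a, f a}) ` A"
  have "?M \<subseteq> E" using fB assms(5) by auto
  moreover have "disjoint ?M"
  proof (rule disjointI)
    fix e e' assume "e \<in> ?M" "e' \<in> ?M" "e \<noteq> e'"
    then obtain a a' where "a \<in> A" "a' \<in> A" "a \<noteq> a'" "e = {a, f a}" "e' = {a', f a'}"
      by blast
    with fB inj assms(4) show "e \<inter> e' = {}" by blast
  qed
  moreover have "\<Union>?M = A \<union> B"
    using f by (auto simp: bij_betw_def)
  ultimately show ?thesis
    unfolding has_perfect_matching_iff by blast
qed

lemma has_perfect_matching_even_card:
  assumes "finite W" "\<And>e. e \<in> E \<Longrightarrow> card e = 2" "has_perfect_matching E W"
  shows "even (card W)"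
proof -
  obtain M where M: "M \<subseteq> E" "disjoint M" "\<Union>M = W"
    using assms(3) unfolding has_perfect_matching_iff by blast
  have "card W = sum card M"
    using card_Union_disjoint[OF M(2)] M(3) assms(1) by (metis Union_upper finite_subset)
  also have "\<dots> = 2 * card M"
    using M(1) assms(2) by (simp add: subset_iff)
  finally show ?thesis by simp
qed

lemma has_perfect_matching_remove_edges:
  assumes "M \<subseteq> E \<union> F" "disjoint M"
  shows "has_perfect_matching E (\<Union>M - \<Union>(M \<inter> F))"
proof -
  have "\<Union>M - \<Union>(M \<inter> F) = \<Union>(M - M \<inter> F)"
    using assms(2) by (rule diff_Union_pairwise_disjoint) simp
  moreover have "M - M \<inter> F \<subseteq> E" "disjoint (M - M \<inter> F)"
    using assms pairwise_subset by blast+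
  ultimately show ?thesis
    unfolding has_perfect_matching_iff by metis
qed

lemma has_perfect_matching_restrict:
  assumes "has_perfect_matching (E1 \<union> E2) W"
    and "\<And>e. e \<in> E1 \<Longrightarrow> e \<subseteq> A" "\<And>e. e \<in> E2 \<Longrightarrow> e \<inter> A = {}"
  shows "has_perfect_matching E1 (W \<inter> A)"
proof -
  obtain M where M: "M \<subseteq> E1 \<union> E2" "disjoint M" "\<Union>M = W"
    using assms(1) unfolding has_perfect_matching_iff by blast
  have "\<Union>(M \<inter> E1) = W \<inter> A"
  proof
    show "\<Union>(M \<inter> E1) \<subseteq> W \<inter> A" using M(3) assms(2) by blast
    show "W \<inter> A \<subseteq> \<Union>(M \<inter> E1)"
    proof
      fix x assume "x \<in> W \<inter> A"
      then obtain e where "e \<in> M" "x \<in> e" "x \<in> A" using M(3) by blast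
      moreover from this have "e \<notin> E2" using assms(3) by blast
      ultimately show "x \<in> \<Union>(M \<inter> E1)" using M(1) by blast
    qed
  qed
  moreover have "disjoint (M \<inter> E1)"
    using M(2) pairwise_subset by blast
  ultimately show ?thesis
    unfolding has_perfect_matching_iff by blast
qed

lemma has_perfect_matching_subset_tV:
  assumes "distinct (leaves u)" "has_perfect_matching (tE u) W"
  shows "W \<subseteq> tV u"
proof -
  obtain M where "M \<subseteq> tE u" "\<Union>M = W"
    using assms(2) unfolding has_perfect_matching_iff by blast
  with tE_subset_tV[OF assms(1)] show ?thesis by blast
qed

lemma card_Union_Int_singletons:
  assumes "finite M" "disjoint M" "\<And>e. e \<in> M \<Longrightarrow> card (e \<inter> A) = 1"
  shows "card (\<Union>M \<inter> A) = card M"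
proof -
  have "\<Union>M \<inter> A = (\<Union>e\<in>M. e \<inter> A)" by blast
  also have "card \<dots> = (\<Sum>e\<in>M. card (e \<inter> A))"
  proof (rule card_UN_disjoint[OF assms(1)])
    show "\<forall>e\<in>M. finite (e \<inter> A)" using assms(3) card_ge_0_finite by force
    show "\<forall>e\<in>M. \<forall>e'\<in>M. e \<noteq> e' \<longrightarrow> e \<inter> A \<inter> (e' \<inter> A) = {}"
      using assms(2) unfolding disjoint_def by blast
  qed
  also have "\<dots> = card M" using assms(3) by simp
  finally show ?thesis .
qed

section \<open>Feasible sets\<close>

lemma closed_nbhd_mono: "E \<subseteq> E' \<Longrightarrow> S \<subseteq> S' \<Longrightarrow> closed_nbhd E S \<subseteq> closed_nbhd E' S'"
  unfolding closed_nbhd_def by blast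

lemma closed_nbhd_restrict:
  assumes "w \<in> closed_nbhd E S" "w \<in> A" "\<And>s. {s, w} \<in> E \<Longrightarrow> {s, w} \<in> E' \<and> s \<in> A"
  shows "w \<in> closed_nbhd E' (S \<inter> A)"
  using assms unfolding closed_nbhd_def by blast

lemma k_feasibleE:
  assumes "k_feasible u k S"
  obtains X where "S \<subseteq> tV u" "tV u - tTS u \<subseteq> closed_nbhd (tE u) S"
    "X \<subseteq> S" "X \<subseteq> tTS u" "card X = k" "has_perfect_matching (tE u) (S - X)"
proof -
  from assms obtain X where "S \<subseteq> tV u" "tV u - tTS u \<subseteq> closed_nbhd (tE u) S"
    "X \<subseteq> S \<inter> tTS u" "card X = k" "has_perfect_matching (tE u) (S - X)"
    unfolding k_feasible_def by blast
  then show ?thesis by (intro that[of X]) auto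
qed

lemma k_feasibleI:
  assumes "S \<subseteq> tV u" "tV u - tTS u \<subseteq> closed_nbhd (tE u) S"
    "X \<subseteq> S" "X \<subseteq> tTS u" "card X = k" "has_perfect_matching (tE u) (S - X)"
  shows "k_feasible u k S"
  unfolding k_feasible_def using assms by (intro conjI exI[of _ X]) simp_all

lemma k_feasible_le_card_tTS: "k_feasible u k S \<Longrightarrow> k \<le> card (tTS u)"
  by (erule k_feasibleE) (metis card_mono finite_tTS)

lemma k_feasible_parity:
  assumes "distinct (leaves u)" "k_feasible u k S"
  shows "k \<le> card S" "even (card S - k)"
proof -
  obtain X where X: "S \<subseteq> tV u" "X \<subseteq> S" "card X = k" "has_perfect_matching (tE u) (S - X)"
    using assms(2) by (rule k_feasibleE)
  have "finite S" using X(1) by (rule finite_subset) simp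
  then show "k \<le> card S" using card_mono[OF _ X(2)] X(3) by simp
  have "even (card (S - X))"
    using has_perfect_matching_even_card[OF _ card_tE[OF assms(1)] X(4)] \<open>finite S\<close> by simp
  then show "even (card S - k)"
    using card_Diff_subset[OF finite_subset[OF X(2) \<open>finite S\<close>] X(2)] X(3) by simp
qed

lemma k_feasible_twin:
  assumes "distinct (leaves (Node c l r))" "c \<noteq> Attach"
    and "k_feasible l k1 Sl" "k_feasible r k2 Sr"
  shows "k_feasible (Node c l r) (k1 + k2) (Sl \<union> Sr)"
proof -
  let ?v = "Node c l r"
  have disj: "tV l \<inter> tV r = {}" using distinct_leaves_NodeD[OF assms(1)] by simp
  have TS: "tTS ?v = tTS l \<union> tTS r" and E: "tE l \<union> tE r \<subseteq> tE ?v"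
    using assms(2) by (cases c; auto)+
  obtain Xl where l: "Sl \<subseteq> tV l" "tV l - tTS l \<subseteq> closed_nbhd (tE l) Sl"
    "Xl \<subseteq> Sl" "Xl \<subseteq> tTS l" "card Xl = k1" "has_perfect_matching (tE l) (Sl - Xl)"
    using assms(3) by (rule k_feasibleE)
  obtain Xr where r: "Sr \<subseteq> tV r" "tV r - tTS r \<subseteq> closed_nbhd (tE r) Sr"
    "Xr \<subseteq> Sr" "Xr \<subseteq> tTS r" "card Xr = k2" "has_perfect_matching (tE r) (Sr - Xr)"
    using assms(4) by (rule k_feasibleE)
  show ?thesis
  proof (rule k_feasibleI[where X = "Xl \<union> Xr"])
    show "Sl \<union> Sr \<subseteq> tV ?v" using l(1) r(1) by auto
    have "closed_nbhd (tE l) Sl \<union> closed_nbhd (tE r) Sr \<subseteq> closed_nbhd (tE ?v) (Sl \<union> Sr)"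
      using E by (intro Un_least closed_nbhd_mono) auto
    then show "tV ?v - tTS ?v \<subseteq> closed_nbhd (tE ?v) (Sl \<union> Sr)"
      using l(2) r(2) TS by auto
    show "Xl \<union> Xr \<subseteq> Sl \<union> Sr" "Xl \<union> Xr \<subseteq> tTS ?v" using l(3,4) r(3,4) TS by auto
    have "Xl \<inter> Xr = {}" using l(1,3) r(1,3) disj by blast
    then show "card (Xl \<union> Xr) = k1 + k2"
      using card_Un_disjoint[OF finite_subset[OF l(4)] finite_subset[OF r(4)]] l(5) r(5) by simp
    have "Sl \<union> Sr - (Xl \<union> Xr) = (Sl - Xl) \<union> (Sr - Xr)" using l(1,3) r(1,3) disj by blast
    moreover have "has_perfect_matching (tE l \<union> tE r) ((Sl - Xl) \<union> (Sr - Xr))"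
      by (rule has_perfect_matching_Un[OF l(6) r(6)]) (use l(1) r(1) disj in blast)
    ultimately show "has_perfect_matching (tE ?v) (Sl \<union> Sr - (Xl \<union> Xr))"
      using has_perfect_matching_mono[OF E] by simp
  qed
qed

section \<open>Feasible sets at an attachment node\<close>

lemma Int_tV_cross_edge:
  assumes "distinct (leaves (Node c l r))" "a \<in> tTS l" "b \<in> tTS r"
  shows "{a, b} \<inter> tV l = {a}" "{a, b} \<inter> tV r = {b}"
  using assms(2,3) distinct_leaves_NodeD(3)[OF assms(1)] tTS_subset_tV[of l] tTS_subset_tV[of r]
  by auto

lemma tE_Attach_left:
  assumes "distinct (leaves (Node Attach l r))" "{s, w} \<in> tE (Node Attach l r)" "w \<in> tV l - tTS l"
  shows "{s, w} \<in> tE l \<and> s \<in> tV l"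
proof -
  note d = distinct_leaves_NodeD[OF assms(1)]
  have "{s, w} \<in> tE l \<or> {s, w} \<in> tE r \<or> (\<exists>a b. {s, w} = {a, b} \<and> a \<in> tTS l \<and> b \<in> tTS r)"
    using assms(2) by auto
  then show ?thesis
  proof (elim disjE exE conjE)
    fix a b assume ab: "{s, w} = {a, b}" "a \<in> tTS l" "b \<in> tTS r"
    have "w \<in> {a, b} \<inter> tV l" using ab(1) assms(3) by blast
    with Int_tV_cross_edge(1)[OF assms(1) ab(2,3)] ab(2) assms(3) show ?thesis by simp
  qed (use assms(3) d tE_subset_tV in blast)+
qed

lemma tE_Attach_right:
  assumes "distinct (leaves (Node Attach l r))" "{s, w} \<in> tE (Node Attach l r)" "w \<in> tV r - tTS r"
  shows "{s, w} \<in> tE r \<and> s \<in> tV r"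
proof -
  note d = distinct_leaves_NodeD[OF assms(1)]
  have "{s, w} \<in> tE l \<or> {s, w} \<in> tE r \<or> (\<exists>a b. {s, w} = {a, b} \<and> a \<in> tTS l \<and> b \<in> tTS r)"
    using assms(2) by auto
  then show ?thesis
  proof (elim disjE exE conjE)
    fix a b assume ab: "{s, w} = {a, b}" "a \<in> tTS l" "b \<in> tTS r"
    have "w \<in> {a, b} \<inter> tV r" using ab(1) assms(3) by blast
    with Int_tV_cross_edge(2)[OF assms(1) ab(2,3)] ab(3) assms(3) show ?thesis by simp
  qed (use assms(3) d tE_subset_tV in blast)+
qed

lemma closed_nbhd_Attach_restrict:
  assumes "distinct (leaves (Node Attach l r))"
    and "tV (Node Attach l r) - tTS (Node Attach l r) \<subseteq> closed_nbhd (tE (Node Attach l r)) S"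
  shows "tV l - tTS l \<subseteq> closed_nbhd (tE l) (S \<inter> tV l)"
    and "tV r - tTS r \<subseteq> closed_nbhd (tE r) (S \<inter> tV r)"
proof -
  have "tTS l \<inter> tV r = {}"
    using distinct_leaves_NodeD(3)[OF assms(1)] tTS_subset_tV[of l] by blast
  then have "tV l - tTS l \<subseteq> closed_nbhd (tE (Node Attach l r)) S"
    and "tV r - tTS r \<subseteq> closed_nbhd (tE (Node Attach l r)) S"
    using assms(2) by auto
  then show "tV l - tTS l \<subseteq> closed_nbhd (tE l) (S \<inter> tV l)"
    and "tV r - tTS r \<subseteq> closed_nbhd (tE r) (S \<inter> tV r)"
    using tE_Attach_left[OF assms(1)] tE_Attach_right[OF assms(1)]
    by (blast intro: closed_nbhd_restrict)+
qed

lemma has_perfect_matching_Attach_join: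
  assumes "distinct (leaves (Node Attach l r))"
    and "has_perfect_matching (tE l) Wl" "has_perfect_matching (tE r) Wr"
    and "Yl \<subseteq> tTS l" "Yr \<subseteq> tTS r" "card Yl = card Yr" "Wl \<inter> Yl = {}" "Wr \<inter> Yr = {}"
  shows "has_perfect_matching (tE (Node Attach l r)) (Wl \<union> Wr \<union> (Yl \<union> Yr))"
proof -
  let ?v = "Node Attach l r"
  note d = distinct_leaves_NodeD[OF assms(1)]
  have W: "Wl \<subseteq> tV l" "Wr \<subseteq> tV r"
    using has_perfect_matching_subset_tV d assms(2,3) by blast+
  have Y: "Yl \<subseteq> tV l" "Yr \<subseteq> tV r"
    using assms(4,5) tTS_subset_tV[of l] tTS_subset_tV[of r] by blast+
  have "has_perfect_matching (tE l \<union> tE r) (Wl \<union> Wr)"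
    by (rule has_perfect_matching_Un[OF assms(2,3)]) (use W d(3) in blast)
  then have "has_perfect_matching (tE ?v) (Wl \<union> Wr)"
    by (rule has_perfect_matching_mono[rotated]) auto
  moreover have "has_perfect_matching (tE ?v) (Yl \<union> Yr)"
  proof (rule has_perfect_matching_bipartite)
    show "finite Yl" "finite Yr" using finite_subset[OF assms(4)] finite_subset[OF assms(5)] by simp_all
    show "card Yl = card Yr" "Yl \<inter> Yr = {}" using assms(6) Y d(3) by blast+
    fix a b assume "a \<in> Yl" "b \<in> Yr"
    then show "{a, b} \<in> tE ?v" using assms(4,5) by auto
  qed
  moreover have "(Wl \<union> Wr) \<inter> (Yl \<union> Yr) = {}"
    using assms(7,8) W Y d(3) by blast
  ultimately have "has_perfect_matching (tE ?v \<union> tE ?v) (Wl \<union> Wr \<union> (Yl \<union> Yr))"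
    by (rule has_perfect_matching_Un)
  then show ?thesis by simp
qed

lemma Union_cross_edges:
  assumes "distinct (leaves (Node c l r))" "finite N" "disjoint N"
    and "N \<subseteq> {{a, b} |a b. a \<in> tTS l \<and> b \<in> tTS r}"
  shows "\<Union>N \<inter> tV l \<subseteq> tTS l" "\<Union>N \<inter> tV r \<subseteq> tTS r"
    and "card (\<Union>N \<inter> tV l) = card N" "card (\<Union>N \<inter> tV r) = card N"
proof -
  have cross: "\<exists>a b. e \<inter> tV l = {a} \<and> e \<inter> tV r = {b} \<and> a \<in> tTS l \<and> b \<in> tTS r" if e: "e \<in> N" for e
  proof -
    obtain a b where "e = {a, b}" "a \<in> tTS l" "b \<in> tTS r" using e assms(4) by blast
    with Int_tV_cross_edge[OF assms(1)] show ?thesis by blast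
  qed
  show "\<Union>N \<inter> tV l \<subseteq> tTS l"
  proof
    fix x assume "x \<in> \<Union>N \<inter> tV l"
    then obtain e where "e \<in> N" "x \<in> e" "x \<in> tV l" by blast
    with cross[of e] show "x \<in> tTS l" by (metis IntI singletonD)
  qed
  show "\<Union>N \<inter> tV r \<subseteq> tTS r"
  proof
    fix x assume "x \<in> \<Union>N \<inter> tV r"
    then obtain e where "e \<in> N" "x \<in> e" "x \<in> tV r" by blast
    with cross[of e] show "x \<in> tTS r" by (metis IntI singletonD)
  qed
  have "card (e \<inter> tV l) = 1" "card (e \<inter> tV r) = 1" if "e \<in> N" for e
    using cross[OF that] by auto
  then show "card (\<Union>N \<inter> tV l) = card N" "card (\<Union>N \<inter> tV r) = card N"
    using card_Union_Int_singletons[OF assms(2,3)] by blast+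
qed

lemma has_perfect_matching_Attach_split:
  assumes "distinct (leaves (Node Attach l r))" "has_perfect_matching (tE (Node Attach l r)) W"
  obtains Yl Yr where "Yl \<subseteq> W \<inter> tTS l" "Yr \<subseteq> W \<inter> tTS r" "card Yl = card Yr"
    "has_perfect_matching (tE l) (W \<inter> tV l - Yl)" "has_perfect_matching (tE r) (W \<inter> tV r - Yr)"
proof -
  let ?C = "{{a, b} |a b. a \<in> tTS l \<and> b \<in> tTS r}"
  note d = distinct_leaves_NodeD[OF assms(1)]
  obtain M where M: "M \<subseteq> (tE l \<union> tE r) \<union> ?C" "disjoint M" "\<Union>M = W"
    using assms(2) unfolding has_perfect_matching_iff by auto
  have "finite W" using has_perfect_matching_subset_tV[OF assms] by (rule finite_subset) simp
  then have fin: "finite (M \<inter> ?C)"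
    using M(3) by (intro finite_subset[of "M \<inter> ?C" "Pow W"]) auto
  have disj: "disjoint (M \<inter> ?C)" using M(2) by (rule pairwise_subset) simp
  define Y where "Y = \<Union>(M \<inter> ?C)"
  note Y = Union_cross_edges[OF assms(1) fin disj Int_lower2[of M ?C], folded Y_def]
  have "Y \<subseteq> W" using M(3) unfolding Y_def by blast
  have rest: "has_perfect_matching (tE l \<union> tE r) (W - Y)"
    using has_perfect_matching_remove_edges[OF M(1,2)] M(3) unfolding Y_def by simp
  have El: "e \<subseteq> tV l" "e \<inter> tV r = {}" if "e \<in> tE l" for e
    using tE_subset_tV[OF d(1) that] d(3) by blast+
  have Er: "e \<subseteq> tV r" "e \<inter> tV l = {}" if "e \<in> tE r" for e
    using tE_subset_tV[OF d(2) that] d(3) by blast+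
  have "has_perfect_matching (tE l) ((W - Y) \<inter> tV l)"
    using has_perfect_matching_restrict[OF rest El(1) Er(2)] .
  moreover have "has_perfect_matching (tE r \<union> tE l) (W - Y)"
    using rest by (simp add: Un_commute)
  then have "has_perfect_matching (tE r) ((W - Y) \<inter> tV r)"
    using has_perfect_matching_restrict[OF _ Er(1) El(2)] by blast
  moreover have "(W - Y) \<inter> tV l = W \<inter> tV l - Y \<inter> tV l" "(W - Y) \<inter> tV r = W \<inter> tV r - Y \<inter> tV r"
    by blast+
  ultimately show ?thesis
    using Y \<open>Y \<subseteq> W\<close> by (intro that[of "Y \<inter> tV l" "Y \<inter> tV r"]) auto
qed

lemma k_feasible_Attach:
  assumes "distinct (leaves (Node Attach l r))"
    and "k_feasible l k' Sl" "k_feasible r j Sr" "j \<le> k'" "1 \<le> k'"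
  shows "k_feasible (Node Attach l r) (k' - j) (Sl \<union> Sr)"
proof -
  let ?v = "Node Attach l r"
  have disj: "tV l \<inter> tV r = {}" using distinct_leaves_NodeD[OF assms(1)] by simp
  obtain Xl where l: "Sl \<subseteq> tV l" "tV l - tTS l \<subseteq> closed_nbhd (tE l) Sl"
    "Xl \<subseteq> Sl" "Xl \<subseteq> tTS l" "card Xl = k'" "has_perfect_matching (tE l) (Sl - Xl)"
    using assms(2) by (rule k_feasibleE)
  obtain Xr where r: "Sr \<subseteq> tV r" "tV r - tTS r \<subseteq> closed_nbhd (tE r) Sr"
    "Xr \<subseteq> Sr" "Xr \<subseteq> tTS r" "card Xr = j" "has_perfect_matching (tE r) (Sr - Xr)"
    using assms(3) by (rule k_feasibleE)
  obtain Y where Y: "Y \<subseteq> Xl" "card Y = j"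
    using obtain_subset_with_card_n[of j Xl] assms(4) l(5) by metis
  have "Xl \<noteq> {}" using assms(5) l(5) by auto
  then obtain t where t: "t \<in> Xl" by blast
  show ?thesis
  proof (rule k_feasibleI[where X = "Xl - Y"])
    show "Sl \<union> Sr \<subseteq> tV ?v" using l(1) r(1) by auto
    have "tTS r \<subseteq> closed_nbhd (tE ?v) (Sl \<union> Sr)"
    proof
      fix w assume "w \<in> tTS r"
      with t l(4) have "{t, w} \<in> tE ?v" by auto
      with t l(3) show "w \<in> closed_nbhd (tE ?v) (Sl \<union> Sr)" unfolding closed_nbhd_def by blast
    qed
    moreover have "closed_nbhd (tE l) Sl \<union> closed_nbhd (tE r) Sr \<subseteq> closed_nbhd (tE ?v) (Sl \<union> Sr)"
      by (intro Un_least closed_nbhd_mono) auto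
    ultimately show "tV ?v - tTS ?v \<subseteq> closed_nbhd (tE ?v) (Sl \<union> Sr)"
      using l(2) r(2) by auto
    show "Xl - Y \<subseteq> Sl \<union> Sr" "Xl - Y \<subseteq> tTS ?v" using l(3,4) by auto
    show "card (Xl - Y) = k' - j"
      using card_Diff_subset[OF finite_subset[OF Y(1) finite_subset[OF l(4)]] Y(1)] l(5) Y(2) by simp
    have "has_perfect_matching (tE ?v) ((Sl - Xl) \<union> (Sr - Xr) \<union> (Y \<union> Xr))"
      by (rule has_perfect_matching_Attach_join[OF assms(1) l(6) r(6)]) (use Y l(4) r(4,5) in auto)
    moreover have "Sl \<union> Sr - (Xl - Y) = (Sl - Xl) \<union> (Sr - Xr) \<union> (Y \<union> Xr)"
      using l(1,3) r(1,3) Y(1) disj by blast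
    ultimately show "has_perfect_matching (tE ?v) (Sl \<union> Sr - (Xl - Y))" by simp
  qed
qed

lemma k_feasible_Attach_split:
  assumes "distinct (leaves (Node Attach l r))" "k_feasible (Node Attach l r) k S"
  obtains j where "k_feasible l (k + j) (S \<inter> tV l)" "k_feasible r j (S \<inter> tV r)"
proof -
  let ?v = "Node Attach l r"
  note d = distinct_leaves_NodeD[OF assms(1)]
  obtain X where dom: "tV ?v - tTS ?v \<subseteq> closed_nbhd (tE ?v) S"
    and X: "X \<subseteq> S" "X \<subseteq> tTS l" "card X = k" and pm: "has_perfect_matching (tE ?v) (S - X)"
    using assms(2) by (rule k_feasibleE) simp
  obtain Yl Yr where Y: "Yl \<subseteq> (S - X) \<inter> tTS l" "Yr \<subseteq> (S - X) \<inter> tTS r" "card Yl = card Yr"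
    and pm_l: "has_perfect_matching (tE l) ((S - X) \<inter> tV l - Yl)"
    and pm_r: "has_perfect_matching (tE r) ((S - X) \<inter> tV r - Yr)"
    using has_perfect_matching_Attach_split[OF assms(1) pm] by blast
  have "X \<subseteq> tV l" using X(2) tTS_subset_tV[of l] by blast
  show ?thesis
  proof (rule that)
    show "k_feasible l (k + card Yr) (S \<inter> tV l)"
    proof (rule k_feasibleI[where X = "X \<union> Yl"])
      show "X \<union> Yl \<subseteq> S \<inter> tV l" "X \<union> Yl \<subseteq> tTS l"
        using X(1,2) Y(1) \<open>X \<subseteq> tV l\<close> tTS_subset_tV[of l] by auto
      have "X \<inter> Yl = {}" using Y(1) by blast
      then show "card (X \<union> Yl) = k + card Yr"
        using card_Un_disjoint[OF finite_subset[OF X(2)] finite_subset[of Yl "tTS l"]] X(3) Y(1,3)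
        by auto
      have "S \<inter> tV l - (X \<union> Yl) = (S - X) \<inter> tV l - Yl" by blast
      then show "has_perfect_matching (tE l) (S \<inter> tV l - (X \<union> Yl))" using pm_l by simp
    qed (use closed_nbhd_Attach_restrict(1)[OF assms(1) dom] in simp_all)
    show "k_feasible r (card Yr) (S \<inter> tV r)"
    proof (rule k_feasibleI[where X = Yr])
      show "Yr \<subseteq> S \<inter> tV r" "Yr \<subseteq> tTS r" using Y(2) tTS_subset_tV[of r] by auto
      have "S \<inter> tV r - Yr = (S - X) \<inter> tV r - Yr" using \<open>X \<subseteq> tV l\<close> d(3) by blast
      then show "has_perfect_matching (tE r) (S \<inter> tV r - Yr)" using pm_r by simp
    qed (use closed_nbhd_Attach_restrict(2)[OF assms(1) dom] in simp_all)
  qed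
qed

section \<open>The parameters \<open>\<gamma>\<close>, \<open>min\<close>, \<open>\<alpha>\<close> and \<open>\<beta>\<close>\<close>

lemma k_feasible_Leaf: "k \<le> 1 \<Longrightarrow> k_feasible (Leaf x) k (if k = 0 then {} else {x})"
  by (rule k_feasibleI[where X = "if k = 0 then {} else {x}"]) (auto simp: has_perfect_matching_empty)

lemma k_feasible_exists:
  "distinct (leaves u) \<Longrightarrow> k \<le> card (tTS u) \<Longrightarrow> \<exists>S. k_feasible u k S"
proof (induction u arbitrary: k)
  case (Leaf x)
  then show ?case using k_feasible_Leaf[of k x] by auto
next
  case (Node c l r)
  note d = distinct_leaves_NodeD[OF Node.prems(1)]
  show ?case
  proof (cases "c = Attach")
    case True
    then have k: "k \<le> card (tTS l)" using Node.prems(2) by simp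
    obtain k' j where "k = k' - j" "j \<le> k'" "1 \<le> k'" "k' \<le> card (tTS l)" "j \<le> card (tTS r)"
    proof (cases "k = 0")
      case True
      then show ?thesis using that[of 1 1] one_le_card_tTS[of l] one_le_card_tTS[of r] by simp
    next
      case False
      then show ?thesis using that[of k 0] k by simp
    qed
    with Node.IH d obtain Sl Sr where "k_feasible l k' Sl" "k_feasible r j Sr" by metis
    with k_feasible_Attach[OF Node.prems(1)[unfolded True]] \<open>j \<le> k'\<close> \<open>1 \<le> k'\<close> \<open>k = k' - j\<close> True
    show ?thesis by blast
  next
    case False
    have "tTS l \<inter> tTS r = {}" using d(3) tTS_subset_tV[of l] tTS_subset_tV[of r] by blast
    then have "card (tTS (Node c l r)) = card (tTS l) + card (tTS r)"
      using False card_Un_disjoint[OF finite_tTS finite_tTS] by (cases c) auto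
    then have "k \<le> card (tTS l) + card (tTS r)"
      using Node.prems(2) by simp
    then obtain k1 k2 where "k = k1 + k2" "k1 \<le> card (tTS l)" "k2 \<le> card (tTS r)"
      using that[of "min k (card (tTS l))" "k - min k (card (tTS l))"] by simp
    with Node.IH d obtain Sl Sr where "k_feasible l k1 Sl" "k_feasible r k2 Sr" by metis
    with k_feasible_twin[OF Node.prems(1) False] \<open>k = k1 + k2\<close> show ?thesis by blast
  qed
qed

lemma hgamma_le: "k_feasible u k S \<Longrightarrow> hgamma u k \<le> enat (card S)"
  unfolding hgamma_def by (rule INF_lower2[of S]) auto

lemma hgamma_enatE:
  assumes "hgamma u k = enat n"
  obtains S where "k_feasible u k S" "card S = n"
proof -
  let ?A = "(\<lambda>S. enat (card S)) ` {S. k_feasible u k S}"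
  have "\<exists>S0. k_feasible u k S0"
  proof (rule ccontr)
    assume "\<nexists>S0. k_feasible u k S0"
    then have "hgamma u k = \<infinity>" by (simp add: hgamma_def top_enat_def)
    with assms show False by simp
  qed
  then obtain S0 where "k_feasible u k S0" by blast
  then have "Inf ?A \<in> ?A" by (intro wellorder_InfI[of "enat (card S0)"]) simp
  with assms that show ?thesis unfolding hgamma_def by auto
qed

lemma hgamma_eq_infinity: "card (tTS u) < k \<Longrightarrow> hgamma u k = \<infinity>"
proof -
  assume "card (tTS u) < k"
  then have "{S. k_feasible u k S} = {}" using k_feasible_le_card_tTS by fastforce
  then show ?thesis by (simp add: hgamma_def top_enat_def)
qed

lemma hgamma_finite_le_card: "hgamma u k \<noteq> \<infinity> \<Longrightarrow> k \<le> card (tTS u)"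
  by (rule ccontr) (simp add: hgamma_eq_infinity)

lemma hgamma_finite: "distinct (leaves u) \<Longrightarrow> k \<le> card (tTS u) \<Longrightarrow> hgamma u k \<noteq> \<infinity>"
proof -
  assume "distinct (leaves u)" "k \<le> card (tTS u)"
  then obtain S where "k_feasible u k S" using k_feasible_exists by blast
  then show ?thesis using hgamma_le[of u k S] by (cases "hgamma u k") simp_all
qed

lemma hgamma_parity:
  assumes "distinct (leaves u)" "hgamma u k = enat n"
  shows "even (n + k)"
proof -
  obtain S where S: "k_feasible u k S" "card S = n" using assms(2) by (rule hgamma_enatE)
  show ?thesis using k_feasible_parity[OF assms(1) S(1)] S(2) by (auto simp: even_diff_nat)
qed

lemma hmin_le_hgamma: "hmin u \<le> hgamma u k"
proof (cases "k \<le> card (tTS u)")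
  case True
  then show ?thesis unfolding hmin_def by (intro Min_le) auto
qed (simp add: hgamma_eq_infinity)

lemma hmin_attained: obtains i where "i \<le> card (tTS u)" "hgamma u i = hmin u"
proof -
  have "hmin u \<in> hgamma u ` {0..card (tTS u)}"
    unfolding hmin_def by (intro Min_in) auto
  with that show ?thesis by auto
qed

lemma hmin_finite: "distinct (leaves u) \<Longrightarrow> hmin u \<noteq> \<infinity>"
  by (metis hmin_attained hgamma_finite)

lemma halpha_hbeta_mem:
  "halpha u \<in> {k. k \<le> card (tTS u) \<and> hgamma u k = hmin u}"
  "hbeta u \<in> {k. k \<le> card (tTS u) \<and> hgamma u k = hmin u}"
proof -
  have "{k. k \<le> card (tTS u) \<and> hgamma u k = hmin u} \<noteq> {}"
    using hmin_attained by blast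
  then show "halpha u \<in> {k. k \<le> card (tTS u) \<and> hgamma u k = hmin u}"
    "hbeta u \<in> {k. k \<le> card (tTS u) \<and> hgamma u k = hmin u}"
    unfolding halpha_def hbeta_def by (intro Min_in Max_in; simp)+
qed

lemma hgamma_halpha: "hgamma u (halpha u) = hmin u"
  and hgamma_hbeta: "hgamma u (hbeta u) = hmin u"
  and hbeta_le_card: "hbeta u \<le> card (tTS u)"
  using halpha_hbeta_mem[of u] by simp_all

lemma halpha_le_hbeta: "halpha u \<le> hbeta u"
  unfolding halpha_def hbeta_def using halpha_hbeta_mem[of u]
  by (metis (no_types, lifting) Max_ge Min_le finite_nat_set_iff_bounded_le mem_Collect_eq order_trans)

lemma hgamma_eq_hminD:
  assumes "distinct (leaves u)" "hgamma u k = hmin u"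
  shows "halpha u \<le> k" "k \<le> hbeta u"
proof -
  have "k \<le> card (tTS u)" using assms hmin_finite hgamma_finite_le_card by metis
  then show "halpha u \<le> k" "k \<le> hbeta u"
    unfolding halpha_def hbeta_def using assms(2) by (auto intro: Min_le Max_ge)
qed

lemma hgamma_eq_hmin_parity:
  assumes "distinct (leaves u)" "hgamma u i = hmin u" "hgamma u k = hmin u"
  shows "even (i + k)"
proof -
  obtain m where "hmin u = enat m" using hmin_finite[OF assms(1)] by auto
  then have "even (m + i)" "even (m + k)"
    using hgamma_parity[OF assms(1), of i m] hgamma_parity[OF assms(1), of k m] assms(2,3) by simp_all
  then show ?thesis by simp
qed

lemma halpha_eqI:
  assumes "k0 \<le> card (tTS u)" "hgamma u k0 = m" "\<And>k. m \<le> hgamma u k"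
    and "\<And>k. k < k0 \<Longrightarrow> hgamma u k \<noteq> m"
  shows "halpha u = k0"
proof -
  obtain i where "hgamma u i = hmin u" by (rule hmin_attained)
  then have "hmin u = m" using hmin_le_hgamma[of u k0] assms(2,3) by (metis order_antisym)
  show ?thesis
    unfolding halpha_def
  proof (rule Min_eqI)
    show "k0 \<in> {k. k \<le> card (tTS u) \<and> hgamma u k = hmin u}"
      using assms(1,2) \<open>hmin u = m\<close> by simp
    fix k assume "k \<in> {k. k \<le> card (tTS u) \<and> hgamma u k = hmin u}"
    then have "hgamma u k = m" using \<open>hmin u = m\<close> by simp
    then show "k0 \<le> k" by (metis assms(4) not_le)
  qed simp
qed

lemma propP_hgamma_eq_hmin:
  assumes "propP u" "halpha u \<le> i" "i \<le> hbeta u" "even (i - halpha u)"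
  shows "hgamma u i = hmin u"
proof (cases "i = halpha u \<or> i = hbeta u")
  case True
  then show ?thesis using hgamma_halpha hgamma_hbeta by metis
next
  case False
  with assms(2,3) have "halpha u < i" "i < hbeta u" by auto
  with assms(1,4) hbeta_le_card[of u] show ?thesis unfolding propP_def by auto
qed

section \<open>\<open>\<alpha>\<close> at an attachment node\<close>

lemma hgamma_Attach_le:
  assumes "distinct (leaves (Node Attach l r))" "j \<le> k'" "1 \<le> k'"
  shows "hgamma (Node Attach l r) (k' - j) \<le> hgamma l k' + hgamma r j"
proof (cases "hgamma l k'"; cases "hgamma r j")
  fix nl nr assume "hgamma l k' = enat nl" "hgamma r j = enat nr"
  moreover obtain Sl Sr where Sl: "k_feasible l k' Sl" "card Sl = nl"
    and Sr: "k_feasible r j Sr" "card Sr = nr"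
    using hgamma_enatE calculation by metis
  moreover have "Sl \<inter> Sr = {}" "finite Sl" "finite Sr"
    using Sl(1) Sr(1) distinct_leaves_NodeD(3)[OF assms(1)]
    by (auto elim!: k_feasibleE dest: finite_subset)
  ultimately show ?thesis
    using hgamma_le[OF k_feasible_Attach[OF assms(1) Sl(1) Sr(1) assms(2,3)]]
    by (simp add: card_Un_disjoint)
qed simp_all

lemma hgamma_Attach_ge:
  assumes "distinct (leaves (Node Attach l r))"
  obtains j where "hgamma l (k + j) + hgamma r j \<le> hgamma (Node Attach l r) k"
proof (cases "hgamma (Node Attach l r) k")
  case (enat n)
  then obtain S where S: "k_feasible (Node Attach l r) k S" "card S = n" by (rule hgamma_enatE)
  obtain j where l: "k_feasible l (k + j) (S \<inter> tV l)" and r: "k_feasible r j (S \<inter> tV r)"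
    using k_feasible_Attach_split[OF assms S(1)] .
  have "S \<subseteq> tV l \<union> tV r" using S(1) by (rule k_feasibleE) simp
  then have "S = (S \<inter> tV l) \<union> (S \<inter> tV r)" by blast
  moreover have "(S \<inter> tV l) \<inter> (S \<inter> tV r) = {}" using distinct_leaves_NodeD(3)[OF assms] by blast
  ultimately have "card S = card (S \<inter> tV l) + card (S \<inter> tV r)"
    by (metis card_Un_disjoint finite_Int finite_tV)
  then have "hgamma l (k + j) + hgamma r j \<le> hgamma (Node Attach l r) k"
    using add_mono[OF hgamma_le[OF l] hgamma_le[OF r]] enat S(2) by simp
  then show ?thesis by (rule that)
qed (simp add: that[of 0])

lemma hmin_Attach_le_hgamma:
  assumes "distinct (leaves (Node Attach l r))"
  shows "hmin l + hmin r \<le> hgamma (Node Attach l r) k"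
proof -
  obtain j where "hgamma l (k + j) + hgamma r j \<le> hgamma (Node Attach l r) k"
    using hgamma_Attach_ge[OF assms] .
  then show ?thesis
    using add_mono[OF hmin_le_hgamma hmin_le_hgamma] order_trans by blast
qed

lemma hgamma_Attach_eq_hmin_sumE:
  assumes "distinct (leaves (Node Attach l r))"
    and "hgamma (Node Attach l r) k = hmin l + hmin r"
  obtains j where "hgamma l (k + j) = hmin l" "hgamma r j = hmin r"
proof -
  note d = distinct_leaves_NodeD[OF assms(1)]
  obtain j where j: "hgamma l (k + j) + hgamma r j \<le> hmin l + hmin r"
    using hgamma_Attach_ge[OF assms(1)] assms(2) by metis
  obtain ml mr where "hmin l = enat ml" "hmin r = enat mr"
    using hmin_finite[OF d(1)] hmin_finite[OF d(2)] by auto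
  with j hmin_le_hgamma[of l "k + j"] hmin_le_hgamma[of r j]
  have "hgamma l (k + j) = hmin l \<and> hgamma r j = hmin r"
    by (cases "hgamma l (k + j)"; cases "hgamma r j") auto
  then show ?thesis using that by blast
qed

lemma halpha_Attach_eqI:
  assumes "distinct (leaves (Node Attach l r))"
    and "hgamma l k' = hmin l" "hgamma r j = hmin r" "j \<le> k'" "1 \<le> k'"
    and "\<And>k. k < k' - j \<Longrightarrow> hgamma (Node Attach l r) k \<noteq> hmin l + hmin r"
  shows "halpha (Node Attach l r) = k' - j"
proof (rule halpha_eqI)
  have "k' \<le> card (tTS l)"
    using hgamma_finite_le_card assms(2) hmin_finite distinct_leaves_NodeD(1)[OF assms(1)] by metis
  then show "k' - j \<le> card (tTS (Node Attach l r))" by simp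
  show "hgamma (Node Attach l r) (k' - j) = hmin l + hmin r"
    using hgamma_Attach_le[OF assms(1,4,5)] hmin_Attach_le_hgamma[OF assms(1)] assms(2,3)
    by (simp add: order_antisym)
qed (use hmin_Attach_le_hgamma[OF assms(1)] assms(6) in auto)

lemma halpha_Attach_hbeta_less:
  assumes "distinct (leaves (Node Attach l r))" "hbeta r < halpha l"
  shows "halpha (Node Attach l r) = halpha l - hbeta r"
proof (rule halpha_Attach_eqI[OF assms(1) hgamma_halpha hgamma_hbeta])
  show "hbeta r \<le> halpha l" "1 \<le> halpha l" using assms(2) by simp_all
  fix k assume k: "k < halpha l - hbeta r"
  show "hgamma (Node Attach l r) k \<noteq> hmin l + hmin r"
  proof
    assume "hgamma (Node Attach l r) k = hmin l + hmin r"
    then obtain j where "hgamma l (k + j) = hmin l" "hgamma r j = hmin r"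
      by (rule hgamma_Attach_eq_hmin_sumE[OF assms(1)])
    then have "halpha l \<le> k + j" "j \<le> hbeta r"
      using hgamma_eq_hminD distinct_leaves_NodeD[OF assms(1)] by blast+
    with k show False by simp
  qed
qed

text \<open>The bounds play the roles of \<open>\<alpha>\<close> and \<open>\<beta>\<close> of the two children: by (P), every index
  in \<open>[al, bl]\<close> of the parity of \<open>al\<close> is a minimum position of the left child, and likewise
  on the right.\<close>

lemma parity_offset_witness:
  fixes al bl ar br :: nat
  assumes "al \<le> bl" "ar \<le> br" "even (al + bl)" "even (ar + br)" "al \<le> br" "ar \<le> bl"
    and "\<not> (al = 0 \<and> br = 0)" "\<not> (ar = 0 \<and> bl = 0)"
  obtains i j where "al \<le> i" "i \<le> bl" "even (i - al)" "ar \<le> j" "j \<le> br" "even (j - ar)"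
    "j \<le> i" "1 \<le> i" "i - j = (al + ar) mod 2"
proof -
  consider "ar < al" "even (al + ar)" | "ar < al" "odd (al + ar)" | "al \<le> ar" "odd (al + ar)"
    | "al \<le> ar" "even (al + ar)" "0 < ar" | "al = 0" "ar = 0"
    by linarith
  then show ?thesis
  proof cases
    case 1
    show ?thesis
      by (rule that[of al al]) (use assms 1 in \<open>auto simp: even_diff_nat mod2_eq_if\<close>)
  next
    case 2
    show ?thesis
      by (rule that[of al "al - 1"]) (use assms 2 in \<open>auto simp: even_diff_nat mod2_eq_if\<close>)
  next
    case 3
    have "ar \<noteq> bl" using assms(3) 3(2) by auto
    show ?thesis
      by (rule that[of "ar + 1" ar]) (use assms 3 \<open>ar \<noteq> bl\<close> in \<open>auto simp: even_diff_nat mod2_eq_if\<close>)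
  next
    case 4
    show ?thesis
      by (rule that[of ar ar]) (use assms 4 in \<open>auto simp: even_diff_nat mod2_eq_if\<close>)
  next
    case 5
    show ?thesis
      by (rule that[of 2 2]) (use assms 5 in \<open>auto simp: even_diff_nat mod2_eq_if\<close>)
  qed
qed

lemma halpha_Attach_mod_2:
  assumes "distinct (leaves (Node Attach l r))" "propP l" "propP r"
    and "halpha l \<le> hbeta r" "halpha r \<le> hbeta l"
    and "\<not> (halpha l = 0 \<and> hbeta r = 0)" "\<not> (halpha r = 0 \<and> hbeta l = 0)"
  shows "halpha (Node Attach l r) = (halpha l + halpha r) mod 2"
proof -
  note d = distinct_leaves_NodeD[OF assms(1)]
  have "even (halpha l + hbeta l)" "even (halpha r + hbeta r)"
    using hgamma_eq_hmin_parity[OF d(1) hgamma_halpha hgamma_hbeta]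
      hgamma_eq_hmin_parity[OF d(2) hgamma_halpha hgamma_hbeta] by simp_all
  then obtain i j where ij: "halpha l \<le> i" "i \<le> hbeta l" "even (i - halpha l)"
      "halpha r \<le> j" "j \<le> hbeta r" "even (j - halpha r)"
      "j \<le> i" "1 \<le> i" "i - j = (halpha l + halpha r) mod 2"
    using parity_offset_witness[OF halpha_le_hbeta halpha_le_hbeta _ _ assms(4-7)] by metis
  have "halpha (Node Attach l r) = i - j"
  proof (rule halpha_Attach_eqI[OF assms(1) _ _ ij(7,8)])
    show "hgamma l i = hmin l" using propP_hgamma_eq_hmin[OF assms(2) ij(1-3)] .
    show "hgamma r j = hmin r" using propP_hgamma_eq_hmin[OF assms(3) ij(4-6)] .
    fix k assume "k < i - j"
    then have k: "k = 0" "odd (halpha l + halpha r)" using ij(9) by presburger+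
    show "hgamma (Node Attach l r) k \<noteq> hmin l + hmin r"
    proof
      assume "hgamma (Node Attach l r) k = hmin l + hmin r"
      then obtain j' where jl: "hgamma l (0 + j') = hmin l" and jr: "hgamma r j' = hmin r"
        unfolding k(1) by (rule hgamma_Attach_eq_hmin_sumE[OF assms(1)])
      have "even (j' + halpha l)" "even (j' + halpha r)"
        using hgamma_eq_hmin_parity[OF d(1) jl[simplified] hgamma_halpha]
          hgamma_eq_hmin_parity[OF d(2) jr hgamma_halpha] .
      with k(2) show False by presburger
    qed
  qed
  with ij(9) show ?thesis by simp
qed

lemma nat_abs_diff_mod_2: "nat \<bar>int a - int b\<bar> mod 2 = (a + b) mod 2"
proof -
  have "nat \<bar>int a - int b\<bar> = (if a \<le> b then b - a else a - b)" by auto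
  moreover have "even (b - a) \<longleftrightarrow> even (a + b)" if "a \<le> b"
    using that by (simp add: even_diff_nat add.commute)
  moreover have "even (a - b) \<longleftrightarrow> even (a + b)" if "\<not> a \<le> b"
    using that by (simp add: even_diff_nat)
  ultimately show ?thesis by (simp add: mod2_eq_if)
qed

theorem lemma31:
  fixes T :: "'a dtree" and G :: "'a graph" and vl vr :: "'a dtree"
  assumes "distance_hereditary G"
    and "decomp_tree T G"
    and "Node Attach vl vr \<in> subtrees T"
    and "propP vl" and "propP vr"
    and "halpha vr \<le> hbeta vl"
    and "\<not> (halpha vl = 0 \<and> hbeta vr = 0)"
    and "\<not> (halpha vr = 0 \<and> hbeta vl = 0)"
  shows "halpha (Node Attach vl vr) =
    (if halpha vl > hbeta vr then halpha vl - hbeta vr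
     else nat \<bar>int (halpha vl) - int (halpha vr)\<bar> mod 2)"
proof -
  have d: "distinct (leaves (Node Attach vl vr))"
    using assms(2,3) distinct_leaves_subtree unfolding decomp_tree_def by blast
  show ?thesis
  proof (cases "hbeta vr < halpha vl")
    case True
    then show ?thesis using halpha_Attach_hbeta_less[OF d] by simp
  next
    case False
    then show ?thesis
      using halpha_Attach_mod_2[OF d assms(4,5) _ assms(6-8)] nat_abs_diff_mod_2 by simp
  qed
qed

end
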